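(* Let $p\neq2$ and let $A=\mathbb Z[S]$ be a commutative polynomial ring over a set $S$. Let $f_1,\dots,f_r$ be distinct nonzero elements of $A$ with $f_i\ne -f_j$ for all $i\ne j$. Then the elements $\langle f_1\rangle,\dots,\langle f_r\rangle$ of $X(A)$ are $\mathbb Z$-linearly independent.
   Context: For a commutative ring $B$, $V(b_0,b_1,\dots)=p(0,b_0,b_1,\dots)$ on $B^{\mathbb N_0}$, $\langle b\rangle=(b,b^p,b^{p^2},\dots)$, and $X(B)$ is the closed subgroup of $B^{\mathbb N_0}$ (product topology) generated by $\{V^n\langle b\rangle\mid n\ge0, b\in B\}$. *)

theory Defs
  imports "HOL-Library.Poly_Mapping" "HOL-Computational_Algebra.Primes"
begin

text \<open>Sequences in B^{N_0} are functions nat => B; the group law is componentwise addition.\<close>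

definition Vop :: "nat \<Rightarrow> (nat \<Rightarrow> 'a::comm_ring_1) \<Rightarrow> nat \<Rightarrow> 'a" where
  "Vop p x = (\<lambda>k. if k = 0 then 0 else of_nat p * x (k - 1))"

definition teich :: "nat \<Rightarrow> 'a::comm_ring_1 \<Rightarrow> nat \<Rightarrow> 'a" where
  "teich p b = (\<lambda>k. b ^ (p ^ k))"

inductive_set Xgen :: "nat \<Rightarrow> (nat \<Rightarrow> 'a::comm_ring_1) set" for p :: nat where
  zero: "(\<lambda>k. 0) \<in> Xgen p"
| gen: "(Vop p ^^ n) (teich p b) \<in> Xgen p"
| diff: "x \<in> Xgen p \<Longrightarrow> y \<in> Xgen p \<Longrightarrow> (\<lambda>k. x k - y k) \<in> Xgen p"

text \<open>Closure in the product topology (B discrete): agreement on every finite initial segment.\<close>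
definition Xgrp :: "nat \<Rightarrow> (nat \<Rightarrow> 'a::comm_ring_1) set" where
  "Xgrp p = {x. \<forall>N. \<exists>y\<in>Xgen p. \<forall>k<N. x k = y k}"

text \<open>Z[S] for S the (arbitrary) type 's: monoid algebra of monomials ('s =>0 nat) over int.\<close>
type_synonym 's intpoly = "('s \<Rightarrow>\<^sub>0 nat) \<Rightarrow>\<^sub>0 int"

end

(*
  Evaluate Z[S] at a point: a multiplicative map chi from monomials to Z extends to a ring
  homomorphism Z[S] -> Z, and by Kronecker substitution (x_s = B^(T^idx s) for suitable integers
  B, T) it can be chosen so that all f_i and all f_i - f_j, f_i + f_j (i ~= j) stay nonzero.
  The images a_i are then nonzero integers of pairwise distinct absolute value, and a relation
  sum c_i a_i^(p^k) = 0 for all k forces c_i = 0: divided by the power of the a_i of largest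
  absolute value, the remaining terms tend to 0 as k grows.
*)
theory Submission
  imports Defs "HOL-Computational_Algebra.Polynomial"
begin

definition pm_eval :: "('m \<Rightarrow> 'b) \<Rightarrow> ('m \<Rightarrow>\<^sub>0 'b) \<Rightarrow> 'b::semiring_0" where
  "pm_eval \<chi> f = (\<Sum>m\<in>Poly_Mapping.keys f. Poly_Mapping.lookup f m * \<chi> m)"

lemma pm_eval_eq_sum_superset:
  assumes "finite A" and "Poly_Mapping.keys f \<subseteq> A"
  shows "pm_eval \<chi> f = (\<Sum>m\<in>A. Poly_Mapping.lookup f m * \<chi> m)"
  unfolding pm_eval_def
  by (rule sum.mono_neutral_left) (use assms in \<open>auto simp: in_keys_iff\<close>)

lemma pm_eval_zero [simp]: "pm_eval \<chi> 0 = 0"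
  by (simp add: pm_eval_def)

lemma pm_eval_single: "pm_eval \<chi> (Poly_Mapping.single m a) = a * \<chi> m"
  by (cases "a = 0") (auto simp: pm_eval_def)

lemma pm_eval_add: "pm_eval \<chi> (f + g) = pm_eval \<chi> f + pm_eval \<chi> g"
proof -
  let ?A = "Poly_Mapping.keys f \<union> Poly_Mapping.keys g"
  have "pm_eval \<chi> (f + g) = (\<Sum>m\<in>?A. Poly_Mapping.lookup (f + g) m * \<chi> m)"
    by (rule pm_eval_eq_sum_superset) (auto simp: keys_add)
  also have "\<dots> = (\<Sum>m\<in>?A. Poly_Mapping.lookup f m * \<chi> m) + (\<Sum>m\<in>?A. Poly_Mapping.lookup g m * \<chi> m)"
    by (simp add: lookup_add distrib_right sum.distrib)
  also have "\<dots> = pm_eval \<chi> f + pm_eval \<chi> g"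
    by (simp add: pm_eval_eq_sum_superset[symmetric])
  finally show ?thesis .
qed

lemma pm_eval_uminus: "pm_eval \<chi> (- f) = - pm_eval \<chi> (f :: 'm \<Rightarrow>\<^sub>0 'b::ring)"
  by (simp add: pm_eval_def sum_negf)

lemma pm_eval_diff: "pm_eval \<chi> (f - g) = pm_eval \<chi> f - pm_eval \<chi> (g :: 'm \<Rightarrow>\<^sub>0 'b::ring)"
  using pm_eval_add[of \<chi> f "- g"] by (simp add: pm_eval_uminus)

lemma pm_eval_sum: "pm_eval \<chi> (\<Sum>i\<in>I. h i) = (\<Sum>i\<in>I. pm_eval \<chi> (h i))"
  by (induction I rule: infinite_finite_induct) (simp_all add: pm_eval_add)

lemma update_eq_add_single:
  "a \<notin> Poly_Mapping.keys f \<Longrightarrow> Poly_Mapping.update a b f = f + Poly_Mapping.single a b"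
  by (rule poly_mapping_eqI) (auto simp: lookup_update lookup_add lookup_single in_keys_iff when_def)

context
  fixes \<chi> :: "'m::monoid_add \<Rightarrow> 'b::comm_semiring_1"
  assumes \<chi>_add: "\<And>a b. \<chi> (a + b) = \<chi> a * \<chi> b" and \<chi>_zero: "\<chi> 0 = 1"
begin

lemma pm_eval_single_mult: "pm_eval \<chi> (Poly_Mapping.single a b * g) = b * \<chi> a * pm_eval \<chi> g"
  by (induction g rule: update_induct)
    (simp_all add: update_eq_add_single pm_eval_add mult_single pm_eval_single
      \<chi>_add algebra_simps)

lemma pm_eval_mult: "pm_eval \<chi> (f * g) = pm_eval \<chi> f * pm_eval \<chi> g"
  by (induction f rule: update_induct)
    (simp_all add: update_eq_add_single pm_eval_add pm_eval_single_mult
      pm_eval_single algebra_simps)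

lemma pm_eval_one: "pm_eval \<chi> 1 = 1"
  by (simp flip: single_one add: pm_eval_single \<chi>_zero)

lemma pm_eval_power: "pm_eval \<chi> (f ^ n) = pm_eval \<chi> f ^ n"
  by (induction n) (simp_all add: pm_eval_one pm_eval_mult)

end

lemma pm_eval_of_int: "\<chi> 0 = 1 \<Longrightarrow> pm_eval \<chi> (of_int c) = (of_int c :: 'b::comm_ring_1)"
  by (simp flip: single_of_int add: pm_eval_single)

lemma coeff_sum_monom_inj_on:
  assumes "finite A" and "inj_on \<phi> A" and "a \<in> A"
  shows "coeff (\<Sum>x\<in>A. monom (c x) (\<phi> x)) (\<phi> a) = c a"
proof -
  have "coeff (\<Sum>x\<in>A. monom (c x) (\<phi> x)) (\<phi> a) = (\<Sum>x\<in>A. if x = a then c x else 0)"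
    unfolding coeff_sum using assms(2,3) by (intro sum.cong) (auto dest: inj_onD)
  then show ?thesis
    using assms(1,3) by simp
qed

lemma ex_of_nat_not_root:
  fixes Q :: "'a::{idom,ring_char_0} poly set"
  assumes "finite Q" and "0 \<notin> Q"
  shows "\<exists>x::nat. \<forall>q\<in>Q. poly q (of_nat x) \<noteq> 0"
proof -
  have "finite (of_nat -` {x. poly q x = 0} :: nat set)" if "q \<in> Q" for q
    using that assms(2) by (intro finite_vimageI poly_roots_finite) (auto simp: inj_on_def)
  then have "finite (\<Union>q\<in>Q. of_nat -` {x. poly q x = 0} :: nat set)"
    using assms(1) by blast
  then obtain x :: nat where "x \<notin> (\<Union>q\<in>Q. of_nat -` {x. poly q x = 0})"
    using ex_new_if_finite[OF infinite_UNIV_nat] by blast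
  then show ?thesis
    by auto
qed

text \<open>Kronecker substitution: the evaluation is that of the univariate polynomial
  \<open>\<Sum> g\<^sub>m X\<^bsup>\<phi> m\<^esup>\<close>, which is nonzero because \<open>\<phi>\<close> is injective on the monomials of \<open>g\<close>.\<close>
lemma ex_pm_eval_power_nonzero:
  fixes G :: "('m \<Rightarrow>\<^sub>0 'a::{idom,ring_char_0}) set" and \<phi> :: "'m \<Rightarrow> nat"
  assumes "finite G" and "0 \<notin> G" and "\<And>g. g \<in> G \<Longrightarrow> inj_on \<phi> (Poly_Mapping.keys g)"
  shows "\<exists>B::nat. \<forall>g\<in>G. pm_eval (\<lambda>m. of_nat B ^ \<phi> m) g \<noteq> 0"
proof -
  define P where "P g = (\<Sum>m\<in>Poly_Mapping.keys g. monom (Poly_Mapping.lookup g m) (\<phi> m))" for g :: "'m \<Rightarrow>\<^sub>0 'a"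
  have "P g \<noteq> 0" if "g \<in> G" for g
  proof -
    from that assms(2) obtain m where "m \<in> Poly_Mapping.keys g"
      by fastforce
    then have "coeff (P g) (\<phi> m) \<noteq> 0"
      unfolding P_def using assms(3)[OF that] by (simp add: coeff_sum_monom_inj_on in_keys_iff)
    then show ?thesis
      by auto
  qed
  then have "0 \<notin> P ` G"
    by force
  then obtain B :: nat where "\<forall>q\<in>P ` G. poly q (of_nat B) \<noteq> 0"
    using ex_of_nat_not_root[of "P ` G"] assms(1) by blast
  moreover have "poly (P g) x = pm_eval (\<lambda>m. x ^ \<phi> m) g" for g x
    by (simp add: P_def pm_eval_def poly_sum poly_monom)
  ultimately show ?thesis
    by auto
qed

text \<open>The weight of a monomial is its value at \<open>x\<^sub>s = T\<^bsup>idx s\<^esup>\<close>; distinct monomials give distinct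
  polynomials in \<open>T\<close>, so all but finitely many \<open>T\<close> separate them.\<close>
lemma ex_weight_inj_on:
  fixes M :: "('s \<Rightarrow>\<^sub>0 nat) set"
  assumes "finite M"
  shows "\<exists>w :: 's \<Rightarrow> nat. inj_on (pm_eval w) M"
proof -
  define V where "V = \<Union> (Poly_Mapping.keys ` M)"
  have "finite V"
    unfolding V_def using assms by simp
  then obtain idx :: "'s \<Rightarrow> nat" where idx: "inj_on idx V"
    using finite_imp_inj_to_nat_seg by blast
  define q where "q m = (\<Sum>s\<in>V. monom (int (Poly_Mapping.lookup m s)) (idx s))" for m
  have coeff_q: "coeff (q m) (idx s) = int (Poly_Mapping.lookup m s)" if "s \<in> V" for s m
    unfolding q_def using coeff_sum_monom_inj_on[OF \<open>finite V\<close> idx that] .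
  have poly_q: "poly (q m) (int T) = int (pm_eval (\<lambda>s. T ^ idx s) m)" if "m \<in> M" for m T
    using that \<open>finite V\<close>
    by (simp add: q_def poly_sum poly_monom pm_eval_eq_sum_superset[of V] V_def UN_upper)
  have "inj_on q M"
  proof (rule inj_onI, rule poly_mapping_eqI)
    fix m m' s
    assume m: "m \<in> M" "m' \<in> M" and "q m = q m'"
    show "Poly_Mapping.lookup m s = Poly_Mapping.lookup m' s"
    proof (cases "s \<in> V")
      case True
      then show ?thesis
        using coeff_q[of s m] coeff_q[of s m'] \<open>q m = q m'\<close> by simp
    next
      case False
      then show ?thesis
        using m by (auto simp: V_def in_keys_iff)
    qed
  qed
  define D where "D = (\<lambda>(m, m'). q m - q m') ` (M \<times> M - Id)"
  have "finite D"
    unfolding D_def using assms by simp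
  moreover have "0 \<notin> D"
    unfolding D_def using \<open>inj_on q M\<close> by (auto dest: inj_onD)
  ultimately obtain T :: nat where T: "\<forall>d\<in>D. poly d (of_nat T) \<noteq> 0"
    using ex_of_nat_not_root by blast
  have "inj_on (pm_eval (\<lambda>s. T ^ idx s)) M"
  proof (rule inj_onI, rule ccontr)
    fix m m'
    assume "m \<in> M" "m' \<in> M" "pm_eval (\<lambda>s. T ^ idx s) m = pm_eval (\<lambda>s. T ^ idx s) m'" "m \<noteq> m'"
    then have "q m - q m' \<in> D" and "poly (q m - q m') (of_nat T) = 0"
      unfolding D_def by (auto simp: poly_q)
    with T show False
      by blast
  qed
  then show ?thesis
    by blast
qed

lemma ex_pm_eval_hom_nonzero:
  fixes G :: "(('s \<Rightarrow>\<^sub>0 nat) \<Rightarrow>\<^sub>0 'a::{idom,ring_char_0}) set"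
  assumes "finite G" and "0 \<notin> G"
  obtains \<chi> :: "('s \<Rightarrow>\<^sub>0 nat) \<Rightarrow> 'a"
  where "\<And>a b. \<chi> (a + b) = \<chi> a * \<chi> b" and "\<chi> 0 = 1" and "\<And>g. g \<in> G \<Longrightarrow> pm_eval \<chi> g \<noteq> 0"
proof -
  obtain w :: "'s \<Rightarrow> nat" where w: "inj_on (pm_eval w) (\<Union> (Poly_Mapping.keys ` G))"
    using ex_weight_inj_on[of "\<Union> (Poly_Mapping.keys ` G)"] assms(1) by auto
  have "inj_on (pm_eval w) (Poly_Mapping.keys g)" if "g \<in> G" for g
    using w by (rule inj_on_subset) (use that in blast)
  then obtain B :: nat where "\<forall>g\<in>G. pm_eval (\<lambda>m. of_nat B ^ pm_eval w m) g \<noteq> 0"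
    using ex_pm_eval_power_nonzero[OF assms] by blast
  then show ?thesis
    by (intro that[of "\<lambda>m. of_nat B ^ pm_eval w m"]) (simp_all add: pm_eval_add power_add)
qed

lemma power_sums_linear_independent:
  fixes a c :: "'i \<Rightarrow> 'a::real_normed_field" and e :: "nat \<Rightarrow> nat"
  assumes "finite I" and "\<forall>i\<in>I. a i \<noteq> 0" and "inj_on (\<lambda>i. norm (a i)) I"
    and "filterlim e at_top sequentially"
    and "\<forall>k. (\<Sum>i\<in>I. c i * a i ^ e k) = 0"
  shows "\<forall>i\<in>I. c i = 0"
  using assms
proof (induction I rule: finite_ranking_induct[where f = "\<lambda>i. norm (a i)"])
  case empty
  then show ?case
    by simp
next
  case (insert x S)
  show ?case
  proof (cases "x \<in> S")
    case True
    with insert show ?thesis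
      by (simp add: insert_absorb)
  next
    case False
    have "norm (a y / a x) < 1" if "y \<in> S" for y
    proof -
      have "norm (a y) \<noteq> norm (a x)"
        using insert.prems(2) that False by simp (metis image_eqI)
      with insert.hyps(2)[OF that] insert.prems(1) show ?thesis
        by (simp add: norm_divide divide_less_eq)
    qed
    then have "(\<lambda>k. \<Sum>y\<in>S. c y * (a y / a x) ^ e k) \<longlonglongrightarrow> 0"
      by (intro tendsto_null_sum tendsto_mult_right_zero
          filterlim_compose[OF LIMSEQ_power_zero insert.prems(3)])
    moreover have "(\<Sum>y\<in>S. c y * (a y / a x) ^ e k) = - c x" for k
    proof -
      have "(\<Sum>y\<in>S. c y * a y ^ e k) = - c x * a x ^ e k"
        using insert.prems(4) False insert.hyps(1) by (simp add: eq_neg_iff_add_eq_0 add.commute)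
      then show ?thesis
        using insert.prems(1) by (simp add: power_divide sum_divide_distrib[symmetric] mult.assoc[symmetric])
    qed
    ultimately have "c x = 0"
      by (simp add: LIMSEQ_const_iff)
    moreover have "\<forall>y\<in>S. c y = 0"
      using insert.prems \<open>c x = 0\<close> False insert.hyps(1)
      by (intro insert.IH) (auto intro: inj_on_subset)
    ultimately show ?thesis
      by simp
  qed
qed

lemma power_sequences_linear_independent:
  fixes f :: "'i \<Rightarrow> 's intpoly" and c :: "'i \<Rightarrow> int" and e :: "nat \<Rightarrow> nat"
  assumes "finite I" and "\<forall>i\<in>I. f i \<noteq> 0"
    and "\<forall>i\<in>I. \<forall>j\<in>I. i \<noteq> j \<longrightarrow> f i \<noteq> f j \<and> f i \<noteq> - f j"
    and "filterlim e at_top sequentially"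
    and "\<forall>k. (\<Sum>i\<in>I. of_int (c i) * f i ^ e k) = 0"
  shows "\<forall>i\<in>I. c i = 0"
proof -
  define G where "G = f ` I \<union> (\<Union>i\<in>I. \<Union>j\<in>I - {i}. {f i - f j, f i + f j})"
  have "finite G"
    using assms(1) by (simp add: G_def)
  moreover have "0 \<notin> G"
    using assms(2,3) by (auto simp: G_def add_eq_0_iff)
  ultimately obtain \<chi> where hom: "\<And>a b. \<chi> (a + b) = \<chi> a * \<chi> b" and "\<chi> 0 = 1"
    and nonzero: "\<And>g. g \<in> G \<Longrightarrow> pm_eval \<chi> g \<noteq> 0"
    by (rule ex_pm_eval_hom_nonzero) blast
  define a where "a i = real_of_int (pm_eval \<chi> (f i))" for i
  have "\<forall>i\<in>I. a i \<noteq> 0"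
    using nonzero by (simp add: a_def G_def)
  moreover have "inj_on (\<lambda>i. norm (a i)) I"
  proof (rule inj_onI, rule ccontr)
    fix i j
    assume ij: "i \<in> I" "j \<in> I" "norm (a i) = norm (a j)" "i \<noteq> j"
    then have "f i - f j \<in> G" and "f i + f j \<in> G"
      unfolding G_def by blast+
    then have "pm_eval \<chi> (f i - f j) \<noteq> 0" and "pm_eval \<chi> (f i + f j) \<noteq> 0"
      using nonzero by blast+
    with ij show False
      by (auto simp: a_def pm_eval_diff pm_eval_add abs_eq_iff)
  qed
  moreover have "\<forall>k. (\<Sum>i\<in>I. of_int (c i) * a i ^ e k) = 0"
  proof
    fix k
    have "(\<Sum>i\<in>I. of_int (c i) * a i ^ e k)
        = real_of_int (pm_eval \<chi> (\<Sum>i\<in>I. of_int (c i) * f i ^ e k))"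
      using hom \<open>\<chi> 0 = 1\<close>
      by (simp add: a_def pm_eval_sum pm_eval_mult pm_eval_power pm_eval_of_int)
    also have "\<dots> = 0"
      using assms(5) by simp
    finally show "(\<Sum>i\<in>I. of_int (c i) * a i ^ e k) = 0" .
  qed
  ultimately have "\<forall>i\<in>I. real_of_int (c i) = 0"
    by (rule power_sums_linear_independent[OF assms(1) _ _ assms(4)])
  then show ?thesis
    by simp
qed

lemma teich_mem_Xgrp: "teich p b \<in> Xgrp p"
proof -
  have "(Vop p ^^ 0) (teich p b) \<in> Xgen p"
    by (rule Xgen.gen)
  then show ?thesis
    unfolding Xgrp_def by auto
qed

theorem lemma4p2:
  fixes p r :: nat and f :: "nat \<Rightarrow> 's intpoly"
  assumes "prime p" and "p \<noteq> 2"
    and "inj_on f {..<r}"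
    and "\<forall>i<r. f i \<noteq> 0"
    and "\<forall>i<r. \<forall>j<r. i \<noteq> j \<longrightarrow> f i \<noteq> - f j"
  shows "(\<forall>i<r. teich p (f i) \<in> (Xgrp p :: (nat \<Rightarrow> 's intpoly) set))
    \<and> (\<forall>c :: nat \<Rightarrow> int.
          (\<forall>k. (\<Sum>i<r. of_int (c i) * teich p (f i) k) = 0) \<longrightarrow> (\<forall>i<r. c i = 0))"
proof (intro conjI allI impI)
  show "teich p (f i) \<in> Xgrp p" for i
    by (rule teich_mem_Xgrp)
next
  fix c :: "nat \<Rightarrow> int"
  assume "\<forall>k. (\<Sum>i<r. of_int (c i) * teich p (f i) k) = 0"
  moreover have "filterlim (\<lambda>k. p ^ k) at_top sequentially"
    using prime_gt_1_nat[OF \<open>prime p\<close>]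
    by (intro filterlim_subseq strict_monoI power_strict_increasing)
  moreover have "\<forall>i\<in>{..<r}. \<forall>j\<in>{..<r}. i \<noteq> j \<longrightarrow> f i \<noteq> f j \<and> f i \<noteq> - f j"
    using assms(3,5) by (auto dest: inj_onD)
  ultimately have "\<forall>i\<in>{..<r}. c i = 0"
    using power_sequences_linear_independent[of "{..<r}" f] assms(4) by (simp add: teich_def)
  then show "c i = 0" if "i < r" for i
    using that by simp
qed

end
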